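(* Let $\vartheta=\vartheta_{\{a,b,c\}}^{\mathcal B,h}$ be a $3$-molecule with base $\{a,b,c\}$ and further vertices $v_1,\dots,v_h$, and let $C_3$ be the $3$-cycle on vertices $\{a,v_1,z\}$, where $z$ is a new vertex. Let $G=C_3+_{av_1}\vartheta$ be the $2$-sum of $C_3$ and $\vartheta$ along the edge $av_1$ (present in both). If $\{a,v_1\}$ is not contained in any minimal edge cover set of $\vartheta$, then $\mathrm{Ent}(G)\ge4$.
   Context: Graphs are finite and undirected; connectivity of a graph is the largest $k$ such that one must remove at least $k$ vertices to disconnect it (by convention $K_m$, $m\ge3$, has connectivity $m-1$). $3$-molecule: for $h\ge1$, base $\{a,b,c\}$ and a set $\mathcal B$ of edges among $a,b,c$, $\vartheta_{\{a,b,c\}}^{\mathcal B,h}$ has vertex set $\{a,b,c,v_1,\dots,v_h\}$ and edge set $\mathcal B\cup\{v_ix:1\le i\le h,\ x\in\{a,b,c\}\}$, with the requirement $h\ge 3-k'$, $k'$ the connectivity of the subgraph induced by $\{a,b,c\}$. $2$-sum: for graphs $G_1,G_2$ and edges $e_1=a_1b_1\in E_{G_1}$, $e_2=a_2b_2\in E_{G_2}$, $G_1+_{e_1e_2}G_2$ is obtained from the disjoint union by identifying $a_1$ with $a_2$ and $b_1$ with $b_2$ and deleting $e_1$ and $e_2$ (here the edge $av_1$ of $C_3$ is identified with the edge $av_1$ of $\vartheta$). An edge cover set is a set of vertices containing an endpoint of every edge; a minimal edge cover set means one of minimum cardinality (for a $3$-molecule this cardinality is $3$). Entanglement: in the game $\mathrm{Ent}(G,k)$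 Thief plays against $k$ cops. Initially no cop is placed and Thief picks a vertex. Each round, Cops may do nothing, place a new cop (at most $k$ in total) on Thief's current vertex, or move a placed cop to Thief's current vertex; then Thief must move along an edge to an adjacent vertex not occupied by a cop, and is caught if he cannot. Infinite plays are won by Thief. $\mathrm{Ent}(G)$ is the least $k$ for which Cops have a winning strategy. *)

theory Defs
  imports Main
begin

definition edge_rel :: "'a set \<Rightarrow> 'a set set \<Rightarrow> ('a \<times> 'a) set" where
  "edge_rel V E = {(x, y). x \<in> V \<and> y \<in> V \<and> x \<noteq> y \<and> {x, y} \<in> E}"

definition connected_graph :: "'a set \<Rightarrow> 'a set set \<Rightarrow> bool" where
  "connected_graph V E \<longleftrightarrow> (\<forall>x\<in>V. \<forall>y\<in>V. (x, y) \<in> (edge_rel V E)\<^sup>*)"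

definition complete_graph :: "'a set \<Rightarrow> 'a set set \<Rightarrow> bool" where
  "complete_graph V E \<longleftrightarrow> (\<forall>x\<in>V. \<forall>y\<in>V. x \<noteq> y \<longrightarrow> {x, y} \<in> E)"

definition connectivity :: "'a set \<Rightarrow> 'a set set \<Rightarrow> nat" where
  "connectivity V E =
     (if complete_graph V E then card V - 1
      else Min {card S | S. S \<subseteq> V \<and> \<not> connected_graph (V - S) E})"

definition molecule_V :: "'a \<Rightarrow> 'a \<Rightarrow> 'a \<Rightarrow> (nat \<Rightarrow> 'a) \<Rightarrow> nat \<Rightarrow> 'a set" where
  "molecule_V a b c v h = {a, b, c} \<union> v ` {1..h}"

definition molecule_E :: "'a \<Rightarrow> 'a \<Rightarrow> 'a \<Rightarrow> 'a set set \<Rightarrow> (nat \<Rightarrow> 'a) \<Rightarrow> nat \<Rightarrow> 'a set set" where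
  "molecule_E a b c Bs v h = Bs \<union> {{v i, x} | i x. i \<in> {1..h} \<and> x \<in> {a, b, c}}"

text \<open>2-sum of two graphs along an edge e present in both, where the two graphs
  already share exactly the two endpoints of e (identification done by naming).\<close>
definition two_sum :: "'a set \<times> 'a set set \<Rightarrow> 'a set \<times> 'a set set \<Rightarrow> 'a set \<Rightarrow> 'a set \<times> 'a set set" where
  "two_sum G1 G2 e = (fst G1 \<union> fst G2, (snd G1 - {e}) \<union> (snd G2 - {e}))"

text \<open>Edge cover sets (sets of vertices meeting every edge) and minimal (= minimum
  cardinality) ones.\<close>
definition edge_cover_set :: "'a set \<Rightarrow> 'a set set \<Rightarrow> 'a set \<Rightarrow> bool" where
  "edge_cover_set V E S \<longleftrightarrow> S \<subseteq> V \<and> (\<forall>e\<in>E. e \<inter> S \<noteq> {})"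

definition min_edge_cover_set :: "'a set \<Rightarrow> 'a set set \<Rightarrow> 'a set \<Rightarrow> bool" where
  "min_edge_cover_set V E S \<longleftrightarrow> edge_cover_set V E S \<and>
     card S = Min {card T | T. edge_cover_set V E T}"

text \<open>Since the Thief never stands on a cop, cops
  always occupy distinct vertices, so a cop configuration is a set of vertices.
  A Cops strategy maps the history of Thief positions [t_0,...,t_n] (t_n the
  current Thief position) to the set of occupied vertices after the Cops' move
  in that round.\<close>

definition prev_cops :: "('a list \<Rightarrow> 'a set) \<Rightarrow> 'a list \<Rightarrow> 'a set" where
  "prev_cops \<sigma> ts = (if length ts \<le> 1 then {} else \<sigma> (butlast ts))"

definition legal_cop_strategy :: "nat \<Rightarrow> ('a list \<Rightarrow> 'a set) \<Rightarrow> bool" where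
  "legal_cop_strategy k \<sigma> \<longleftrightarrow>
     (\<forall>ts. ts \<noteq> [] \<longrightarrow>
        (let C = prev_cops \<sigma> ts; x = last ts in
           \<sigma> ts = C
         \<or> (card C < k \<and> \<sigma> ts = insert x C)
         \<or> (\<exists>u\<in>C. \<sigma> ts = insert x (C - {u}))))"

definition thief_escapes :: "'a set \<Rightarrow> 'a set set \<Rightarrow> ('a list \<Rightarrow> 'a set) \<Rightarrow> (nat \<Rightarrow> 'a) \<Rightarrow> bool" where
  "thief_escapes V E \<sigma> t \<longleftrightarrow> t 0 \<in> V \<and>
     (\<forall>n. t (Suc n) \<in> V \<and> t n \<noteq> t (Suc n) \<and> {t n, t (Suc n)} \<in> E \<and>
          t (Suc n) \<notin> \<sigma> (map t [0..<Suc n]))"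

definition cops_win :: "'a set \<Rightarrow> 'a set set \<Rightarrow> nat \<Rightarrow> bool" where
  "cops_win V E k \<longleftrightarrow> (\<exists>\<sigma>. legal_cop_strategy k \<sigma> \<and> (\<nexists>t. thief_escapes V E \<sigma> t))"

definition entanglement :: "'a set \<times> 'a set set \<Rightarrow> nat" where
  "entanglement G = (LEAST k. cops_win (fst G) (snd G) k)"

end

theory Submission
  imports Defs
begin

text \<open>If h \<ge> 3, G contains K_{3,3} with the edge a v_1 subdivided by z.  The connectivity and
  edge-cover hypotheses exclude every molecule with h \<le> 2 except h = 2 with base edges b c and one
  of a b, a c, and then G contains K_5 minus the matching {a c, v_1 v_2}, again with a v_1
  subdivided by z.  On either subgraph the thief escapes three cops forever by always standing on
  a vertex with a cop-free neighbour; this invariant is checked exhaustively, and it survives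
  embedding the subgraph into G because cops are only ever placed on the thief's vertex.\<close>

section \<open>The entanglement game\<close>

definition cop_moves :: "nat \<Rightarrow> 'v \<Rightarrow> 'v set \<Rightarrow> 'v set set" where
  "cop_moves k x C =
     insert C ((if card C < k then {insert x C} else {}) \<union> (\<lambda>u. insert x (C - {u})) ` C)"

lemma legal_cop_strategy_cop_moves:
  assumes "legal_cop_strategy k \<sigma>" "ts \<noteq> []"
  shows "\<sigma> ts \<in> cop_moves k (last ts) (prev_cops \<sigma> ts)"
  using assms unfolding legal_cop_strategy_def cop_moves_def Let_def by auto

lemma cops_win_mono:
  assumes "cops_win V E k" "k \<le> m"
  shows "cops_win V E m"
  using assms unfolding cops_win_def legal_cop_strategy_def Let_def
  by (meson order_less_le_trans)

lemma cop_moves_subset: "D \<in> cop_moves k x C \<Longrightarrow> D \<subseteq> insert x C"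
  unfolding cop_moves_def by (auto split: if_splits)

lemma card_cop_moves_le:
  assumes "D \<in> cop_moves k x C" "card C \<le> k"
  shows "card D \<le> k"
proof -
  have "card (insert x (C - {u})) \<le> card C" if "u \<in> C" for u
  proof (cases "finite C")
    case True
    hence "0 < card C" using that card_gt_0_iff by blast
    thus ?thesis using True that by (simp add: card_insert_if card_Diff_singleton)
  qed simp
  thus ?thesis using assms unfolding cop_moves_def by (auto split: if_splits simp: card_insert_le_m1)
qed

lemma cop_moves_image:
  assumes "inj_on f W" "x \<in> W" "C \<subseteq> W"
  shows "cop_moves k (f x) (f ` C) = (`) f ` cop_moves k x C"
proof -
  have "f ` C - {f u} = f ` (C - {u})" if "u \<in> C" for u
    using assms that inj_on_image_set_diff[of f W C "{u}"] by auto
  moreover have "card (f ` C) = card C"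
    using assms by (simp add: card_image inj_on_subset)
  ultimately show ?thesis unfolding cop_moves_def by (auto simp: image_image)
qed

lemma not_cops_win_if_invariant:
  fixes safe :: "'v \<Rightarrow> 'v set \<Rightarrow> bool"
  assumes start: "s \<in> V" "safe s {}"
    and step: "\<And>x C D. safe x C \<Longrightarrow> D \<in> cop_moves k x C \<Longrightarrow>
                 \<exists>y\<in>V. y \<noteq> x \<and> {x, y} \<in> E \<and> y \<notin> D \<and> safe y D"
  shows "\<not> cops_win V E k"
proof
  assume "cops_win V E k"
  then obtain \<sigma> where legal: "legal_cop_strategy k \<sigma>" and caught: "\<nexists>t. thief_escapes V E \<sigma> t"
    unfolding cops_win_def by blast
  define reply where
    "reply ts = (SOME y. y \<in> V \<and> y \<noteq> last ts \<and> {last ts, y} \<in> E \<and> y \<notin> \<sigma> ts \<and> safe y (\<sigma> ts))" for ts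
  define history where "history n = rec_nat [s] (\<lambda>_ ts. ts @ [reply ts]) n" for n
  define t where "t n = last (history n)" for n
  have reply: "reply ts \<in> V \<and> reply ts \<noteq> last ts \<and> {last ts, reply ts} \<in> E \<and> reply ts \<notin> \<sigma> ts
                 \<and> safe (reply ts) (\<sigma> ts)"
    if "ts \<noteq> []" "safe (last ts) (prev_cops \<sigma> ts)" for ts
    unfolding reply_def
    by (rule someI_ex) (use step[OF that(2) legal_cop_strategy_cop_moves[OF legal that(1)]] in blast)
  have history: "history n = map t [0..<Suc n] \<and> safe (t n) (prev_cops \<sigma> (history n))" for n
  proof (induction n)
    case 0
    show ?case using start by (simp add: history_def t_def prev_cops_def)
  next
    case (Suc n)
    have ne: "history n \<noteq> []" using Suc.IH by auto
    have good: "safe (reply (history n)) (\<sigma> (history n))"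
      using reply[OF ne] Suc.IH unfolding t_def by blast
    have extend: "history (Suc n) = history n @ [reply (history n)]" by (simp add: history_def)
    hence "t (Suc n) = reply (history n)" by (simp add: t_def)
    moreover have "prev_cops \<sigma> (history (Suc n)) = \<sigma> (history n)"
      using extend ne by (simp add: prev_cops_def)
    ultimately show ?case using Suc.IH extend good by simp
  qed
  have "thief_escapes V E \<sigma> t"
    unfolding thief_escapes_def
  proof (intro conjI allI)
    show "t 0 \<in> V" using start by (simp add: history_def t_def)
    fix n
    have "history n \<noteq> []" using history[of n] by auto
    moreover have "t (Suc n) = reply (history n)" "t n = last (history n)"
      by (simp_all add: history_def t_def)
    ultimately show "t (Suc n) \<in> V" "t n \<noteq> t (Suc n)" "{t n, t (Suc n)} \<in> E"
      "t (Suc n) \<notin> \<sigma> (map t [0..<Suc n])"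
      using reply[of "history n"] history[of n] by metis+
  qed
  thus False using caught by blast
qed

lemma cops_win_card:
  assumes "finite V"
  shows "cops_win V E (card V)"
proof -
  \<comment> \<open>Cops stay on every vertex the thief has visited, so an escaping play would be injective.\<close>
  define \<sigma> where "\<sigma> ts = set ts \<inter> V" for ts :: "'a list"
  have "legal_cop_strategy (card V) \<sigma>"
    unfolding legal_cop_strategy_def Let_def
  proof (intro allI impI)
    fix ts :: "'a list"
    assume "ts \<noteq> []"
    then obtain xs x where ts: "ts = xs @ [x]" by (metis append_butlast_last_id)
    have C: "prev_cops \<sigma> ts = set xs \<inter> V"
      by (cases xs) (auto simp: prev_cops_def \<sigma>_def ts)
    have \<sigma>: "\<sigma> ts = insert x (set xs) \<inter> V" by (simp add: \<sigma>_def ts)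
    show "\<sigma> ts = prev_cops \<sigma> ts
      \<or> card (prev_cops \<sigma> ts) < card V \<and> \<sigma> ts = insert (last ts) (prev_cops \<sigma> ts)
      \<or> (\<exists>u\<in>prev_cops \<sigma> ts. \<sigma> ts = insert (last ts) (prev_cops \<sigma> ts - {u}))"
    proof (cases "x \<in> V \<and> x \<notin> set xs")
      case True
      hence "card (set xs \<inter> V) < card V" using assms by (intro psubset_card_mono) auto
      thus ?thesis using True unfolding C \<sigma> by (intro disjI2 disjI1) (simp add: ts)
    next
      case False
      thus ?thesis unfolding C \<sigma> by (intro disjI1) blast
    qed
  qed
  moreover have "\<not> thief_escapes V E \<sigma> t" for t
  proof
    assume escapes: "thief_escapes V E \<sigma> t"
    have in_V: "t 0 \<in> V" "\<And>p. t (Suc p) \<in> V" and fresh: "\<And>p. t (Suc p) \<notin> \<sigma> (map t [0..<Suc p])"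
      using escapes unfolding thief_escapes_def by blast+
    have "t n \<in> V" for n using in_V by (cases n) simp_all
    hence "finite (range t)" using assms by (meson finite_subset image_subsetI)
    moreover have "t m \<noteq> t n" if "m < n" for m n
    proof -
      obtain p where n: "n = Suc p" using \<open>m < n\<close> less_imp_Suc_add by blast
      have "t m \<in> \<sigma> (map t [0..<n])" using \<open>m < n\<close> \<open>t m \<in> V\<close> by (simp add: \<sigma>_def)
      thus ?thesis using fresh[of p] n by metis
    qed
    hence "inj t" by (rule linorder_injI)
    ultimately show False using finite_imageD by blast
  qed
  ultimately show ?thesis unfolding cops_win_def by blast
qed

lemma entanglement_gt_if_not_cops_win:
  assumes "finite V" "\<not> cops_win V E k"
  shows "k < entanglement (V, E)"
proof (rule ccontr)
  assume "\<not> k < entanglement (V, E)"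
  moreover have "cops_win V E (entanglement (V, E))"
    unfolding entanglement_def fst_conv snd_conv
    by (rule LeastI[of "cops_win V E", OF cops_win_card[OF assms(1)]])
  ultimately show False using assms(2) cops_win_mono by (metis not_less)
qed

section \<open>Escaping three cops on two small graphs\<close>

definition escape_graph :: "nat \<Rightarrow> 'v set \<Rightarrow> ('v \<Rightarrow> 'v set) \<Rightarrow> bool" where
  "escape_graph k W N \<longleftrightarrow>
     (\<forall>x\<in>W. \<forall>C\<in>Pow W. x \<notin> C \<longrightarrow> card C \<le> k \<longrightarrow> \<not> N x \<subseteq> C \<longrightarrow>
        (\<forall>D\<in>cop_moves k x C. \<exists>y\<in>N x - D. \<not> N y \<subseteq> D))"

lemma not_cops_win_if_escape_graph_embeds:
  assumes escape: "escape_graph k W N" and loopless: "\<forall>x\<in>W. N x \<subseteq> W - {x}"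
    and inj: "inj_on f W" and vertices: "f ` W \<subseteq> V" and edges: "\<forall>x\<in>W. \<forall>y\<in>N x. {f x, f y} \<in> E"
    and start: "s \<in> W" "N s \<noteq> {}"
  shows "\<not> cops_win V E k"
proof (rule not_cops_win_if_invariant)
  define safe where
    "safe x C \<longleftrightarrow> x \<in> W \<and> C \<subseteq> W \<and> x \<notin> C \<and> card C \<le> k \<and> \<not> N x \<subseteq> C" for x C
  show "f s \<in> V" using start vertices by blast
  show "\<exists>x C. f s = f x \<and> {} = f ` C \<and> safe x C"
    using start by (intro exI[of _ s] exI[of _ "{}"]) (auto simp: safe_def)
  fix x' C' D'
  assume "\<exists>x C. x' = f x \<and> C' = f ` C \<and> safe x C" and move: "D' \<in> cop_moves k x' C'"
  then obtain x C where x': "x' = f x" and C': "C' = f ` C" and safe: "safe x C" by blast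
  hence "x \<in> W" "C \<subseteq> W" by (simp_all add: safe_def)
  hence "D' \<in> (`) f ` cop_moves k x C"
    using move cop_moves_image[OF inj] unfolding x' C' by simp
  then obtain D where D: "D \<in> cop_moves k x C" and D': "D' = f ` D" by blast
  have "\<exists>y\<in>N x - D. \<not> N y \<subseteq> D"
    using escape safe D \<open>C \<subseteq> W\<close> unfolding escape_graph_def safe_def by blast
  then obtain y where y: "y \<in> N x - D" "\<not> N y \<subseteq> D" by blast
  have "y \<in> W" "y \<noteq> x" using loopless \<open>x \<in> W\<close> y(1) by auto
  have "D \<subseteq> W" using cop_moves_subset[OF D] \<open>x \<in> W\<close> \<open>C \<subseteq> W\<close> by blast
  have "safe y D"
    using y \<open>y \<in> W\<close> \<open>D \<subseteq> W\<close> card_cop_moves_le[OF D] safe unfolding safe_def by blast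
  moreover have "f y \<noteq> f x" "f y \<notin> f ` D"
    using inj \<open>x \<in> W\<close> \<open>y \<in> W\<close> \<open>D \<subseteq> W\<close> \<open>y \<noteq> x\<close> y(1) by (auto dest: inj_onD)
  ultimately show
    "\<exists>y'\<in>V. y' \<noteq> x' \<and> {x', y'} \<in> E \<and> y' \<notin> D' \<and> (\<exists>y C. y' = f y \<and> D' = f ` C \<and> safe y C)"
    using vertices edges \<open>x \<in> W\<close> \<open>y \<in> W\<close> y(1) unfolding x' D' by blast
qed

lemma not_cops_win_if_adjacency_list_embeds:
  fixes vs :: "'v list" and adj :: "nat list list"
  assumes escape: "escape_graph k {0..<n} (\<lambda>i. set (adj ! i))" and "length vs = n"
    and "\<forall>i\<in>{0..<n}. set (adj ! i) \<subseteq> {0..<n} - {i}"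
    and "distinct vs" "set vs \<subseteq> V" "\<forall>i\<in>{0..<n}. \<forall>j\<in>set (adj ! i). {vs ! i, vs ! j} \<in> E"
    and "0 < n" "adj ! 0 \<noteq> []"
  shows "\<not> cops_win V E k"
proof (rule not_cops_win_if_escape_graph_embeds[OF escape, where f = "(!) vs" and s = 0])
  show "inj_on ((!) vs) {0..<n}" using assms(2,4) by (intro inj_on_nth) auto
  show "(!) vs ` {0..<n} \<subseteq> V" using assms(2,5) nth_mem by fastforce
qed (use assms in auto)

text \<open>K_{3,3} with parts {a, b, c} and {v_1, v_2, v_3}, the edge a v_1 replaced by the path a z v_1.
  Vertices 0, ..., 6 stand for a, b, c, v_1, v_2, v_3, z; entry i lists the neighbours of i.\<close>

definition subdivided_K33 :: "nat list list" where
  "subdivided_K33 = [[4, 5, 6], [3, 4, 5], [3, 4, 5], [1, 2, 6], [0, 1, 2], [0, 1, 2], [0, 3]]"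

text \<open>Enumerating subsets as sublists keeps the exhaustive check fast.\<close>

lemma escape_graph_subdivided_K33: "escape_graph 3 {0..<7} (\<lambda>i. set (subdivided_K33 ! i))"
  unfolding atLeastLessThan_upt escape_graph_def subseqs_powset[symmetric] subdivided_K33_def
  by code_simp

lemma not_cops_win_3_if_subdivided_K33:
  assumes "distinct [a, b, c, v1, v2, v3, z]" "{a, b, c, v1, v2, v3, z} \<subseteq> V"
    and "{{v1, b}, {v1, c}, {v2, a}, {v2, b}, {v2, c}, {v3, a}, {v3, b}, {v3, c}, {v1, z}, {a, z}} \<subseteq> E"
  shows "\<not> cops_win V E 3"
  using assms
  by (intro not_cops_win_if_adjacency_list_embeds[OF escape_graph_subdivided_K33,
        of "[a, b, c, v1, v2, v3, z]"])
    (simp_all add: subdivided_K33_def atLeastLessThan_upt upt_rec insert_commute)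

text \<open>Vertices 0, ..., 5 stand for a, b, c, v_1, v_2, z.\<close>

definition subdivided_K5_minus_matching :: "nat list list" where
  "subdivided_K5_minus_matching = [[1, 4, 5], [0, 2, 3, 4], [1, 3, 4], [1, 2, 5], [0, 1, 2], [0, 3]]"

lemma escape_graph_subdivided_K5_minus_matching:
  "escape_graph 3 {0..<6} (\<lambda>i. set (subdivided_K5_minus_matching ! i))"
  unfolding atLeastLessThan_upt escape_graph_def subseqs_powset[symmetric]
    subdivided_K5_minus_matching_def
  by code_simp

lemma not_cops_win_3_if_subdivided_K5_minus_matching:
  assumes "distinct [a, b, c, v1, v2, z]" "{a, b, c, v1, v2, z} \<subseteq> V"
    and "{{a, b}, {b, c}, {v1, b}, {v1, c}, {v2, a}, {v2, b}, {v2, c}, {v1, z}, {a, z}} \<subseteq> E"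
  shows "\<not> cops_win V E 3"
  using assms
  by (intro not_cops_win_if_adjacency_list_embeds[OF escape_graph_subdivided_K5_minus_matching,
        of "[a, b, c, v1, v2, z]"])
    (simp_all add: subdivided_K5_minus_matching_def atLeastLessThan_upt upt_rec insert_commute)

section \<open>Molecules and their 2-sum with a triangle\<close>

lemma connectivity_le_if_isolated:
  assumes "finite W" "S \<subseteq> W" "x \<in> W - S" "y \<in> W - S" "x \<noteq> y"
    and isolated: "\<forall>w\<in>W - S. w \<noteq> x \<longrightarrow> {x, w} \<notin> E"
  shows "connectivity W E \<le> card S"
proof -
  have "{x, y} \<notin> E" using isolated assms(4,5) by auto
  hence "\<not> complete_graph W E" using assms(3-5) unfolding complete_graph_def by blast
  moreover have "\<not> connected_graph (W - S) E"
  proof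
    assume "connected_graph (W - S) E"
    hence "(x, y) \<in> (edge_rel (W - S) E)\<^sup>*" using assms unfolding connected_graph_def by blast
    thus False by (rule converse_rtranclE) (use assms in \<open>auto simp: edge_rel_def\<close>)
  qed
  hence "card S \<in> {card S | S. S \<subseteq> W \<and> \<not> connected_graph (W - S) E}" using assms(2) by blast
  moreover have "finite {card S | S. S \<subseteq> W \<and> \<not> connected_graph (W - S) E}"
    by (rule finite_subset[of _ "card ` Pow W"]) (use assms(1) in auto)
  ultimately show ?thesis unfolding connectivity_def by (simp add: Min_le)
qed

lemma min_edge_cover_setI:
  assumes "finite V" "edge_cover_set V E S" "\<And>T. edge_cover_set V E T \<Longrightarrow> card S \<le> card T"
  shows "min_edge_cover_set V E S"
proof -
  have "finite {card T | T. edge_cover_set V E T}"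
    by (rule finite_subset[of _ "card ` Pow V"]) (use assms(1) in \<open>auto simp: edge_cover_set_def\<close>)
  hence "Min {card T | T. edge_cover_set V E T} = card S" using assms by (intro Min_eqI) auto
  thus ?thesis unfolding min_edge_cover_set_def using assms(2) by simp
qed

lemma finite_molecule_V: "finite (molecule_V a b c v h)"
  by (simp add: molecule_V_def)

text \<open>The molecule condition h \<ge> 3 - k' is what makes the minimal edge covers have three vertices.\<close>

lemma molecule_edge_cover_card_ge:
  assumes "distinct [a, b, c]" "inj_on v {1..h}" "v ` {1..h} \<inter> {a, b, c} = {}"
    and "h \<ge> 1" "h + connectivity {a, b, c} Bs \<ge> 3"
    and cover: "edge_cover_set (molecule_V a b c v h) (molecule_E a b c Bs v h) T"
  shows "3 \<le> card T"
proof -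
  define B where "B = {a, b, c}"
  have "finite T"
    by (rule finite_subset[of _ "molecule_V a b c v h"])
      (use cover in \<open>auto simp: edge_cover_set_def molecule_V_def\<close>)
  have hit: "p \<in> T \<or> q \<in> T" if "{p, q} \<in> molecule_E a b c Bs v h" for p q
    using cover that unfolding edge_cover_set_def by auto
  show ?thesis
  proof (cases "B \<subseteq> T")
    case True
    have "card B = 3" using assms(1) by (simp add: B_def)
    thus ?thesis using card_mono[OF \<open>finite T\<close> True] by linarith
  next
    case False
    then obtain x where x: "x \<in> B - T" by blast
    have "v i \<in> T" if "i \<in> {1..h}" for i
      using hit[of "v i" x] x that unfolding molecule_E_def B_def by blast
    hence "(B \<inter> T) \<union> v ` {1..h} \<subseteq> T" by blast
    moreover have "card ((B \<inter> T) \<union> v ` {1..h}) = card (B \<inter> T) + h"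
      using assms(2,3) by (subst card_Un_disjoint) (auto simp: B_def card_image)
    ultimately have "card (B \<inter> T) + h \<le> card T" using card_mono[OF \<open>finite T\<close>] by metis
    moreover have "card (B \<inter> T) + card (B - T) = 3"
      using card_Int_Diff[of B T] assms(1) by (simp add: B_def)
    moreover have "3 \<le> card (B \<inter> T) + h"
    proof (cases "card (B - T) \<le> 1")
      case True
      thus ?thesis using \<open>card (B \<inter> T) + card (B - T) = 3\<close> assms(4) by linarith
    next
      case False
      then obtain y where y: "y \<in> B - T" "y \<noteq> x"
        using x card_le_Suc0_iff_eq[of "B - T"] by (auto simp: B_def)
      have "\<forall>w\<in>B - (B \<inter> T). w \<noteq> x \<longrightarrow> {x, w} \<notin> Bs"
        using hit x unfolding molecule_E_def by blast
      hence "connectivity B Bs \<le> card (B \<inter> T)"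
        using x y by (intro connectivity_le_if_isolated) (auto simp: B_def)
      thus ?thesis using assms(5) \<open>card (B \<inter> T) + card (B - T) = 3\<close> False unfolding B_def by linarith
    qed
    ultimately show ?thesis by linarith
  qed
qed

lemma molecule_cases:
  assumes distinct: "distinct [a, b, c]" and "inj_on v {1..h}" and disjoint: "v ` {1..h} \<inter> {a, b, c} = {}"
    and base: "Bs \<subseteq> {{a, b}, {b, c}, {a, c}}" and "h \<ge> 1" and conn: "h + connectivity {a, b, c} Bs \<ge> 3"
    and no_cover: "\<not> (\<exists>S. min_edge_cover_set (molecule_V a b c v h) (molecule_E a b c Bs v h) S \<and> {a, v 1} \<subseteq> S)"
  shows "3 \<le> h \<or> h = 2 \<and> {b, c} \<in> Bs \<and> ({a, b} \<in> Bs \<or> {a, c} \<in> Bs)"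
proof -
  have no_cover_3: "\<not> edge_cover_set (molecule_V a b c v h) (molecule_E a b c Bs v h) S"
    if "card S = 3" "{a, v 1} \<subseteq> S" for S
    using no_cover that molecule_edge_cover_card_ge[OF assms(1-3,5,6)]
    by (metis min_edge_cover_setI finite_molecule_V)
  have v_not_base: "v i \<notin> {a, b, c}" if "i \<in> {1..h}" for i using disjoint that by blast
  hence v1: "v 1 \<notin> {a, b, c}" using \<open>h \<ge> 1\<close> by simp
  have edge_if_conn_2: "{x, y} \<in> Bs"
    if "x \<in> {a, b, c}" "y \<in> {a, b, c}" "x \<noteq> y" "connectivity {a, b, c} Bs \<ge> 2" for x y
  proof (rule ccontr)
    assume "{x, y} \<notin> Bs"
    hence "connectivity {a, b, c} Bs \<le> card ({a, b, c} - {x, y})"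
      using that by (intro connectivity_le_if_isolated[of _ _ x y]) auto
    thus False using that distinct by (auto simp: card_insert_if)
  qed
  consider "h = 1" | "h = 2" | "3 \<le> h" using \<open>h \<ge> 1\<close> by linarith
  thus ?thesis
  proof cases
    case 1
    hence "Bs = {{a, b}, {b, c}, {a, c}}" using edge_if_conn_2 conn base distinct by auto
    hence "edge_cover_set (molecule_V a b c v h) (molecule_E a b c Bs v h) {a, v 1, b}"
      using 1 by (auto simp: edge_cover_set_def molecule_V_def molecule_E_def)
    moreover have "card {a, v 1, b} = 3" using distinct v1 by auto
    ultimately show ?thesis using no_cover_3 by blast
  next
    case 2
    have "{b, c} \<in> Bs"
    proof (rule ccontr)
      assume "{b, c} \<notin> Bs"
      moreover have "{1..h} = {1, 2}" using 2 by auto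
      ultimately have "edge_cover_set (molecule_V a b c v h) (molecule_E a b c Bs v h) {a, v 1, v 2}"
        using base by (auto simp: edge_cover_set_def molecule_V_def molecule_E_def)
      moreover have "v 2 \<noteq> v 1" using inj_onD[OF assms(2), of 2 1] 2 by auto
      hence "card {a, v 1, v 2} = 3" using v_not_base[of 2] 2 v1 by auto
      ultimately show False using no_cover_3 by blast
    qed
    moreover have "{a, b} \<in> Bs \<or> {a, c} \<in> Bs"
    proof (rule ccontr)
      assume "\<not> ?thesis"
      hence "connectivity {a, b, c} Bs \<le> card ({} :: 'a set)"
        using distinct base by (intro connectivity_le_if_isolated[of _ _ a b]) (auto simp: insert_commute)
      thus False using conn 2 by simp
    qed
    ultimately show ?thesis using 2 by blast
  qed simp
qed

lemma two_sum_triangle_molecule: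
  assumes "distinct [a, b, c]" "inj_on v {1..h}" "v ` {1..h} \<inter> {a, b, c} = {}" "z \<notin> molecule_V a b c v h"
    and "Bs \<subseteq> {{a, b}, {b, c}, {a, c}}" "h \<ge> 1"
  defines "G \<equiv> two_sum ({a, v 1, z}, {{a, v 1}, {v 1, z}, {a, z}})
                    (molecule_V a b c v h, molecule_E a b c Bs v h) {a, v 1}"
  shows "finite (fst G)" and "{a, b, c, z} \<union> v ` {1..h} \<subseteq> fst G"
    and "Bs \<subseteq> snd G" and "{{v 1, b}, {v 1, c}, {v 1, z}, {a, z}} \<subseteq> snd G"
    and "\<And>i. i \<in> {2..h} \<Longrightarrow> {{v i, a}, {v i, b}, {v i, c}} \<subseteq> snd G"
proof -
  have v1: "v 1 \<notin> {a, b, c}" using assms(3,6) by auto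
  show "finite (fst G)" "{a, b, c, z} \<union> v ` {1..h} \<subseteq> fst G"
    by (auto simp: G_def two_sum_def molecule_V_def)
  show "Bs \<subseteq> snd G" using assms(5) v1 by (auto simp: G_def two_sum_def molecule_E_def doubleton_eq_iff)
  show "{{v 1, b}, {v 1, c}, {v 1, z}, {a, z}} \<subseteq> snd G"
    using assms(1,4,6) v1 by (auto simp: G_def two_sum_def molecule_V_def molecule_E_def doubleton_eq_iff)
  show "{{v i, a}, {v i, b}, {v i, c}} \<subseteq> snd G" if "i \<in> {2..h}" for i
  proof -
    have "v i \<notin> {a, b, c, v 1}" using that assms(2,3,6) by (auto dest: inj_onD)
    hence "{v i, x} \<noteq> {a, v 1}" for x by (auto simp: doubleton_eq_iff)
    moreover have "{v i, x} \<in> molecule_E a b c Bs v h" if "x \<in> {a, b, c}" for x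
      using \<open>i \<in> {2..h}\<close> that unfolding molecule_E_def by force
    ultimately show ?thesis unfolding G_def two_sum_def by simp
  qed
qed

lemma two_sum_triangle_molecule_not_cops_win_3:
  assumes "distinct [a, b, c]" "inj_on v {1..h}" "v ` {1..h} \<inter> {a, b, c} = {}" "z \<notin> molecule_V a b c v h"
    and "Bs \<subseteq> {{a, b}, {b, c}, {a, c}}" "h \<ge> 1"
    and "3 \<le> h \<or> h = 2 \<and> {b, c} \<in> Bs \<and> ({a, b} \<in> Bs \<or> {a, c} \<in> Bs)"
  defines "G \<equiv> two_sum ({a, v 1, z}, {{a, v 1}, {v 1, z}, {a, z}})
                    (molecule_V a b c v h, molecule_E a b c Bs v h) {a, v 1}"
  shows "\<not> cops_win (fst G) (snd G) 3"
proof -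
  note G = two_sum_triangle_molecule[OF assms(1-6), folded G_def]
  have v: "v i \<notin> {a, b, c, z}" "v i \<noteq> v j" if "i \<in> {1..h}" "j \<in> {1..h}" "i \<noteq> j" for i j
    using that assms(2-4) by (auto simp: molecule_V_def dest: inj_onD)
  have z: "z \<notin> {a, b, c}" using assms(4) by (simp add: molecule_V_def)
  show ?thesis
  proof (cases "3 \<le> h")
    case True
    show ?thesis
    proof (rule not_cops_win_3_if_subdivided_K33)
      show "distinct [a, b, c, v 1, v 2, v 3, z]"
        using assms(1) z v[of 1 2] v[of 2 3] v[of 3 1] True by auto
      show "{a, b, c, v 1, v 2, v 3, z} \<subseteq> fst G" using G(2) True by auto
      show "{{v 1, b}, {v 1, c}, {v 2, a}, {v 2, b}, {v 2, c}, {v 3, a}, {v 3, b}, {v 3, c}, {v 1, z}, {a, z}}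
          \<subseteq> snd G"
        using G(4) G(5)[of 2] G(5)[of 3] True by auto
    qed
  next
    case False
    hence "h = 2" "{b, c} \<in> Bs" "{a, b} \<in> Bs \<or> {a, c} \<in> Bs" using assms(7) by auto
    obtain x y where xy: "x \<in> {b, c}" "y \<in> {b, c}" "x \<noteq> y" "{a, x} \<in> Bs" "{x, y} \<in> Bs"
    proof (cases "{a, b} \<in> Bs")
      case True
      thus ?thesis using that[of b c] \<open>{b, c} \<in> Bs\<close> assms(1) by simp
    next
      case False
      thus ?thesis using that[of c b] \<open>{b, c} \<in> Bs\<close> \<open>{a, b} \<in> Bs \<or> {a, c} \<in> Bs\<close> assms(1)
        by (auto simp: insert_commute)
    qed
    show ?thesis
    proof (rule not_cops_win_3_if_subdivided_K5_minus_matching[of a x y])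
      show "distinct [a, x, y, v 1, v 2, z]"
        using assms(1) z v[of 1 2] v[of 2 1] \<open>h = 2\<close> xy(1-3) by auto
      show "{a, x, y, v 1, v 2, z} \<subseteq> fst G" using G(2) \<open>h = 2\<close> xy(1,2) by auto
      show "{{a, x}, {x, y}, {v 1, x}, {v 1, y}, {v 2, a}, {v 2, x}, {v 2, y}, {v 1, z}, {a, z}} \<subseteq> snd G"
        using G(3,4) G(5)[of 2] \<open>h = 2\<close> xy by auto
    qed
  qed
qed

theorem mainTheorem11:
  fixes a b c z :: 'a and v :: "nat \<Rightarrow> 'a" and h :: nat and Bs :: "'a set set"
  assumes "distinct [a, b, c]"
    and "inj_on v {1..h}"
    and "v ` {1..h} \<inter> {a, b, c} = {}"
    and "z \<notin> molecule_V a b c v h"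
    and "Bs \<subseteq> {{a, b}, {b, c}, {a, c}}"
    and "h \<ge> 1"
    and "h + connectivity {a, b, c} Bs \<ge> 3"
    and "\<not> (\<exists>S. min_edge_cover_set (molecule_V a b c v h) (molecule_E a b c Bs v h) S
               \<and> {a, v 1} \<subseteq> S)"
  shows "entanglement
           (two_sum ({a, v 1, z}, {{a, v 1}, {v 1, z}, {a, z}})
                    (molecule_V a b c v h, molecule_E a b c Bs v h) {a, v 1}) \<ge> 4"
proof -
  let ?G = "two_sum ({a, v 1, z}, {{a, v 1}, {v 1, z}, {a, z}})
                    (molecule_V a b c v h, molecule_E a b c Bs v h) {a, v 1}"
  have "\<not> cops_win (fst ?G) (snd ?G) 3"
    using two_sum_triangle_molecule_not_cops_win_3[OF assms(1-6) molecule_cases[OF assms(1-3,5-8)]] .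
  hence "3 < entanglement (fst ?G, snd ?G)"
    by (rule entanglement_gt_if_not_cops_win[OF two_sum_triangle_molecule(1)[OF assms(1-6)]])
  thus ?thesis by simp
qed

end
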